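(* Let $G_1$ and $G_2$ be two vertex-disjoint simple connected graphs with $|V(G_1)|=n_1$, $|V(G_2)|=n_2$, $|E(G_1)|=m_1$, $|E(G_2)|=m_2$. Then the edge Q-join $G_1\underline{\vee}_Q G_2$ satisfies \[ F(G_1\underline{\vee}_Q G_2)=F(G_1)+F(G_2)+3n_2^{2}M_1(G_1)+3m_1M_1(G_2)+M_4(G_1)+3n_2\,HM(G_1)+3\,ReZM(G_1)+m_1^{2}(6m_2+m_1n_2)+m_1n_2^{3}. \]
   Context: For a simple graph $G$ and $v\in V(G)$, $d_G(v)$ is the degree of $v$. Define $M_1(G)=\sum_{v\in V(G)}d_G(v)^2$, $F(G)=\sum_{v\in V(G)}d_G(v)^3$, $M_4(G)=\sum_{v\in V(G)}d_G(v)^4$, $HM(G)=\sum_{uv\in E(G)}[d_G(u)+d_G(v)]^2$, and $ReZM(G)=\sum_{uv\in E(G)}d_G(u)d_G(v)\,[d_G(u)+d_G(v)]$. The graph $Q(G)$ is obtained from $G$ by inserting a new vertex into each edge of $G$ (subdividing it) and then joining by an edge each pair of new vertices that lie on adjacent edges of $G$ (edges sharing an end vertex); let $I(G)$ denote the set of these new vertices, so $V(Q(G))=V(G)\cup I(G)$. The edge Q-join $G_1\underline{\vee}_Q G_2$ is the graph obtained from $Q(G_1)$ and $G_2$ (taken vertex-disjoint) by joining each vertex of $I(G_1)$ to every vertex of $G_2$ by an edge. *)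

theory Defs
  imports Main
begin

definition simple_graph :: "'a set \<Rightarrow> 'a set set \<Rightarrow> bool" where
  "simple_graph V E \<longleftrightarrow> finite V \<and> (\<forall>e\<in>E. e \<subseteq> V \<and> card e = 2)"

definition connected_graph :: "'a set \<Rightarrow> 'a set set \<Rightarrow> bool" where
  "connected_graph V E \<longleftrightarrow> V \<noteq> {} \<and>
     (\<forall>u\<in>V. \<forall>v\<in>V. (\<lambda>x y. {x, y} \<in> E)\<^sup>*\<^sup>* u v)"

definition deg :: "'a set set \<Rightarrow> 'a \<Rightarrow> nat" where
  "deg E v = card {e \<in> E. v \<in> e}"

definition M1 :: "'a set \<Rightarrow> 'a set set \<Rightarrow> nat" where
  "M1 V E = (\<Sum>v\<in>V. deg E v ^ 2)"

definition Fidx :: "'a set \<Rightarrow> 'a set set \<Rightarrow> nat" where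
  "Fidx V E = (\<Sum>v\<in>V. deg E v ^ 3)"

definition M4 :: "'a set \<Rightarrow> 'a set set \<Rightarrow> nat" where
  "M4 V E = (\<Sum>v\<in>V. deg E v ^ 4)"

text \<open>For an edge e = {u,v}: d(u)+d(v) is the sum over e, d(u)d(v) the product over e.\<close>
definition HM :: "'a set set \<Rightarrow> nat" where
  "HM E = (\<Sum>e\<in>E. (\<Sum>v\<in>e. deg E v) ^ 2)"

definition ReZM :: "'a set set \<Rightarrow> nat" where
  "ReZM E = (\<Sum>e\<in>E. (\<Prod>v\<in>e. deg E v) * (\<Sum>v\<in>e. deg E v))"

text \<open>Q(G): old vertices are Inl v, new (inserted) vertices are Inr e for e an edge.\<close>
definition QV :: "'a set \<Rightarrow> 'a set set \<Rightarrow> ('a + 'a set) set" where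
  "QV V E = Inl ` V \<union> Inr ` E"

definition QE :: "'a set set \<Rightarrow> ('a + 'a set) set set" where
  "QE E = {{Inl u, Inr e} | u e. e \<in> E \<and> u \<in> e}
        \<union> {{Inr e, Inr f} | e f. e \<in> E \<and> f \<in> E \<and> e \<noteq> f \<and> e \<inter> f \<noteq> {}}"

text \<open>Edge Q-join of G1 = (V1,E1) and G2 = (V2,E2); the two parts are made
vertex-disjoint by tagging with Inl / Inr.\<close>
definition QjoinV :: "'a set \<Rightarrow> 'a set set \<Rightarrow> 'b set \<Rightarrow> (('a + 'a set) + 'b) set" where
  "QjoinV V1 E1 V2 = Inl ` QV V1 E1 \<union> Inr ` V2"

definition QjoinE :: "'a set set \<Rightarrow> 'b set \<Rightarrow> 'b set set \<Rightarrow> (('a + 'a set) + 'b) set set" where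
  "QjoinE E1 V2 E2 = (\<lambda>e. Inl ` e) ` QE E1 \<union> (\<lambda>e. Inr ` e) ` E2
        \<union> {{Inl (Inr e), Inr w} | e w. e \<in> E1 \<and> w \<in> V2}"

end

theory Submission
  imports Defs
begin

text \<open>In the edge Q-join every degree is explicit: a vertex v of G1 keeps d(v); the
vertex inserted on an edge e = uv has two subdivision edges, d(u) + d(v) - 2 edges to the
vertices on adjacent edges and n2 edges to G2, so degree d(u) + d(v) + n2; a vertex w of
G2 has degree d(w) + m1. Cubing and expanding binomially, the sums over edges of
(d(u) + d(v))^k are M1, HM and M4 + 3 ReZM for k = 1, 2, 3 by double counting, and the
degrees of G2 sum to 2 m2.\<close>

lemma finite_edges:
  assumes "simple_graph V E"
  shows "finite E"
  using assms unfolding simple_graph_def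
  by (meson Pow_iff finite_Pow_iff rev_finite_subset subsetI)

lemma deg_Un_disjoint:
  assumes "finite A" "finite B" "A \<inter> B = {}"
  shows "deg (A \<union> B) v = deg A v + deg B v"
proof -
  have "{e \<in> A \<union> B. v \<in> e} = {e \<in> A. v \<in> e} \<union> {e \<in> B. v \<in> e}" by auto
  then show ?thesis
    unfolding deg_def using assms by (simp add: card_Un_disjoint disjoint_iff)
qed

lemma deg_image_inj:
  assumes "inj f"
  shows "deg ((`) f ` E) (f v) = deg E v"
proof -
  have "{e \<in> (`) f ` E. f v \<in> e} = (`) f ` {e \<in> E. v \<in> e}"
    using assms by (auto simp: inj_image_mem_iff dest: injD)
  moreover have "inj_on ((`) f) {e \<in> E. v \<in> e}"
    using assms by (simp add: inj_on_def inj_image_eq_iff)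
  ultimately show ?thesis
    unfolding deg_def by (simp add: card_image)
qed

lemma deg_image_notin_range:
  assumes "\<And>x. f x \<noteq> v"
  shows "deg ((`) f ` E) v = 0"
proof -
  have "{e \<in> (`) f ` E. v \<in> e} = {}" using assms by auto
  then show ?thesis unfolding deg_def by (metis card.empty)
qed

lemma deg_complete_bipartite:
  assumes "inj f" "inj g" "\<And>a b. f a \<noteq> g b" "x \<in> X"
  shows "deg {{f a, g b} | a b. a \<in> X \<and> b \<in> Y} (f x) = card Y"
proof -
  have "{e \<in> {{f a, g b} | a b. a \<in> X \<and> b \<in> Y}. f x \<in> e} = (\<lambda>b. {f x, g b}) ` Y"
    using assms by (auto dest: injD)
  moreover have "inj_on (\<lambda>b. {f x, g b}) Y"
    using assms by (auto simp: inj_on_def doubleton_eq_iff dest: injD)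
  ultimately show ?thesis unfolding deg_def by (metis card_image)
qed

lemma card_adjacent_edges:
  assumes "\<forall>f\<in>E. card f = 2" "finite E" "e \<in> E"
  shows "card {f \<in> E. e \<noteq> f \<and> e \<inter> f \<noteq> {}} + 2 = (\<Sum>v\<in>e. deg E v)"
proof -
  obtain a b where ab: "a \<noteq> b" "e = {a, b}" using assms by (meson card_2_iff)
  have only_e: "f = e" if "f \<in> E" "a \<in> f" "b \<in> f" for f
    using assms(1) that ab by (metis card_2_iff doubleton_eq_iff insertE singletonD)
  let ?Ea = "{f \<in> E. a \<in> f} - {e}" and ?Eb = "{f \<in> E. b \<in> f} - {e}"
  have "{f \<in> E. e \<noteq> f \<and> e \<inter> f \<noteq> {}} = ?Ea \<union> ?Eb" using ab by auto
  moreover have "?Ea \<inter> ?Eb = {}" using only_e by auto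
  moreover have "card ?Ea + 1 = deg E a" "card ?Eb + 1 = deg E b"
    unfolding deg_def using assms(2,3) ab card_Suc_Diff1[of "{f \<in> E. _ \<in> f}" e] by simp_all
  ultimately show ?thesis
    using assms(2) ab by (simp add: card_Un_disjoint)
qed

lemma finite_QE:
  assumes "finite E" "\<forall>e\<in>E. finite e"
  shows "finite (QE E)"
proof (rule finite_subset)
  show "QE E \<subseteq> Pow (Inl ` \<Union>E \<union> Inr ` E)" unfolding QE_def by auto
  show "finite (Pow (Inl ` \<Union>E \<union> Inr ` E))" using assms by simp
qed

lemma deg_QE_vertex: "deg (QE E) (Inl v) = deg E v"
proof -
  have "{x \<in> QE E. Inl v \<in> x} = (\<lambda>e. {Inl v, Inr e}) ` {e \<in> E. v \<in> e}"
    unfolding QE_def by auto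
  moreover have "inj_on (\<lambda>e. {Inl v, Inr e}) {e \<in> E. v \<in> e}"
    by (auto simp: inj_on_def doubleton_eq_iff)
  ultimately show ?thesis unfolding deg_def by (simp add: card_image)
qed

lemma deg_QE_edge:
  fixes E :: "'a set set"
  assumes "\<forall>f\<in>E. card f = 2" "finite E" "e \<in> E"
  shows "deg (QE E) (Inr e) = (\<Sum>v\<in>e. deg E v)"
proof -
  let ?N = "{f \<in> E. e \<noteq> f \<and> e \<inter> f \<noteq> {}}"
  let ?S = "(\<lambda>u. {Inl u, Inr e}) ` e"
  let ?L = "(\<lambda>f. {Inr e, Inr f} :: ('a + 'a set) set) ` ?N"
  have nbhd: "{x \<in> QE E. Inr e \<in> x} = ?S \<union> ?L"
  proof
    show "{x \<in> QE E. Inr e \<in> x} \<subseteq> ?S \<union> ?L"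
      unfolding QE_def by (auto simp: insert_commute Int_commute)
    show "?S \<union> ?L \<subseteq> {x \<in> QE E. Inr e \<in> x}"
      unfolding QE_def using assms(3) by blast
  qed
  have "finite e" using assms card.infinite by fastforce
  have "deg (QE E) (Inr e) = card ?S + card ?L"
    unfolding deg_def nbhd using \<open>finite e\<close> assms(2) by (subst card_Un_disjoint) auto
  also have "card ?S = 2"
    using assms by (subst card_image) (auto simp: inj_on_def doubleton_eq_iff)
  also have "card ?L = card ?N"
    by (subst card_image) (auto simp: inj_on_def doubleton_eq_iff)
  finally have "deg (QE E) (Inr e) = 2 + card ?N" .
  then show ?thesis using card_adjacent_edges[OF assms] by simp
qed

lemma image_Inl_eq_image_Inr_iff: "Inl ` A = Inr ` B \<longleftrightarrow> A = {} \<and> B = {}"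
  by (metis Inr_not_Inl ex_in_conv image_empty imageE imageI)

definition cross_edges :: "'a set set \<Rightarrow> 'b set \<Rightarrow> (('a + 'a set) + 'b) set set" where
  "cross_edges E1 V2 = {{Inl (Inr e), Inr w} | e w. e \<in> E1 \<and> w \<in> V2}"

lemma deg_QjoinE:
  fixes E1 :: "'a set set" and V2 :: "'b set" and E2 :: "'b set set"
  assumes "simple_graph V1 E1" "simple_graph V2 E2"
  shows "deg (QjoinE E1 V2 E2) x = deg ((`) Inl ` QE E1) x + deg ((`) Inr ` E2) x
           + deg (cross_edges E1 V2) x"
proof -
  let ?Q = "(`) Inl ` QE E1 :: (('a + 'a set) + 'b) set set"
  let ?G = "(`) Inr ` E2 :: (('a + 'a set) + 'b) set set"
  let ?J = "cross_edges E1 V2"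
  have fin1: "finite E1" "\<forall>e\<in>E1. finite e"
    using finite_edges[OF assms(1)] assms(1) unfolding simple_graph_def
    by (auto intro: rev_finite_subset)
  have fin2: "finite V2" "finite E2" "{} \<notin> E2"
    using assms(2) finite_edges unfolding simple_graph_def by fastforce+
  have fin: "finite ?Q" "finite ?G" "finite ?J"
    using finite_QE[OF fin1] fin1 fin2 by (simp_all add: cross_edges_def finite_image_set2)
  have disj: "?Q \<inter> ?G = {}" "(?Q \<union> ?G) \<inter> ?J = {}"
    using fin2(3) by (auto simp: cross_edges_def image_iff image_Inl_eq_image_Inr_iff)
  have "deg (?Q \<union> ?G \<union> ?J) x = deg (?Q \<union> ?G) x + deg ?J x"
    using fin disj(2) by (intro deg_Un_disjoint) auto
  also have "deg (?Q \<union> ?G) x = deg ?Q x + deg ?G x"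
    using fin disj(1) by (intro deg_Un_disjoint) auto
  finally show ?thesis unfolding QjoinE_def cross_edges_def .
qed

lemma deg_cross_edges_vertex1: "deg (cross_edges E1 V2) (Inl (Inl v)) = 0"
proof -
  have "{x \<in> cross_edges E1 V2. Inl (Inl v) \<in> x} = {}"
    unfolding cross_edges_def by auto
  then show ?thesis unfolding deg_def by (metis card.empty)
qed

lemma deg_cross_edges_subdivision:
  assumes "e \<in> E1"
  shows "deg (cross_edges E1 V2) (Inl (Inr e)) = card V2"
  using deg_complete_bipartite[of "\<lambda>e. Inl (Inr e)" Inr e E1 V2] assms
  unfolding cross_edges_def by (simp add: inj_def)

lemma deg_cross_edges_vertex2:
  assumes "w \<in> V2"
  shows "deg (cross_edges E1 V2) (Inr w) = card E1"
proof -
  have "cross_edges E1 V2 = {{Inr w, Inl (Inr e)} | w e. w \<in> V2 \<and> e \<in> E1}"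
    unfolding cross_edges_def by (auto simp: insert_commute)
  then show ?thesis
    using deg_complete_bipartite[of Inr "\<lambda>e. Inl (Inr e)" w V2 E1] assms by (simp add: inj_def)
qed

lemma deg_QjoinE_vertex1:
  assumes "simple_graph V1 E1" "simple_graph V2 E2"
  shows "deg (QjoinE E1 V2 E2) (Inl (Inl v)) = deg E1 v"
  using deg_QjoinE[OF assms]
  by (simp add: deg_image_inj deg_QE_vertex deg_image_notin_range deg_cross_edges_vertex1)

lemma deg_QjoinE_subdivision:
  assumes "simple_graph V1 E1" "simple_graph V2 E2" "e \<in> E1"
  shows "deg (QjoinE E1 V2 E2) (Inl (Inr e)) = (\<Sum>v\<in>e. deg E1 v) + card V2"
proof -
  have "deg (QE E1) (Inr e) = (\<Sum>v\<in>e. deg E1 v)"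
    using assms(1,3) finite_edges[OF assms(1)] unfolding simple_graph_def
    by (intro deg_QE_edge) auto
  then show ?thesis
    using deg_QjoinE[OF assms(1,2)] assms(3)
    by (simp add: deg_image_inj deg_image_notin_range deg_cross_edges_subdivision)
qed

lemma deg_QjoinE_vertex2:
  assumes "simple_graph V1 E1" "simple_graph V2 E2" "w \<in> V2"
  shows "deg (QjoinE E1 V2 E2) (Inr w) = deg E2 w + card E1"
  using deg_QjoinE[OF assms(1,2)] assms(3)
  by (simp add: deg_image_inj deg_image_notin_range deg_cross_edges_vertex2)

lemma sum_QjoinV:
  assumes "finite V1" "finite E1" "finite V2"
  shows "(\<Sum>x\<in>QjoinV V1 E1 V2. g x)
    = (\<Sum>v\<in>V1. g (Inl (Inl v))) + (\<Sum>e\<in>E1. g (Inl (Inr e))) + (\<Sum>w\<in>V2. g (Inr w))"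
proof -
  have "QjoinV V1 E1 V2 = (V1 <+> E1) <+> V2"
    unfolding QjoinV_def QV_def Plus_def ..
  then show ?thesis
    using assms by (simp add: sum.Plus)
qed

lemma sum_over_edges_eq_sum_deg:
  fixes f :: "'a \<Rightarrow> nat"
  assumes "finite V" "finite E" "\<forall>e\<in>E. e \<subseteq> V"
  shows "(\<Sum>e\<in>E. \<Sum>v\<in>e. f v) = (\<Sum>v\<in>V. deg E v * f v)"
proof -
  have "(\<Sum>e\<in>E. \<Sum>v\<in>e. f v) = (\<Sum>e\<in>E. \<Sum>v\<in>{v\<in>V. v\<in>e}. f v)"
    using assms(3) by (intro sum.cong refl) (metis Collect_mem_eq inf.absorb_iff2 Collect_conj_eq)
  also have "\<dots> = (\<Sum>v\<in>V. \<Sum>e\<in>{e\<in>E. v\<in>e}. f v)"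
    by (rule sum.swap_restrict[OF assms(2,1)])
  also have "\<dots> = (\<Sum>v\<in>V. deg E v * f v)" by (simp add: deg_def)
  finally show ?thesis .
qed

lemma sum_deg_eq_twice_card_edges:
  assumes "simple_graph V E"
  shows "(\<Sum>v\<in>V. deg E v) = 2 * card E"
proof -
  have "(\<Sum>v\<in>V. deg E v) = (\<Sum>e\<in>E. card e)"
    using sum_over_edges_eq_sum_deg[of V E "\<lambda>_. 1"] finite_edges[OF assms] assms
    unfolding simple_graph_def by simp
  also have "\<dots> = 2 * card E" using assms unfolding simple_graph_def by simp
  finally show ?thesis .
qed

lemma sum_edges_deg_sum:
  assumes "simple_graph V E"
  shows "(\<Sum>e\<in>E. \<Sum>v\<in>e. deg E v) = M1 V E"
  using sum_over_edges_eq_sum_deg[of V E "deg E"] finite_edges[OF assms] assms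
  unfolding simple_graph_def M1_def by (simp add: power2_eq_square)

lemma sum_cube_doubleton:
  fixes d :: "'a \<Rightarrow> nat"
  assumes "card e = 2"
  shows "(\<Sum>v\<in>e. d v) ^ 3 = (\<Sum>v\<in>e. d v ^ 3) + 3 * ((\<Prod>v\<in>e. d v) * (\<Sum>v\<in>e. d v))"
proof -
  obtain a b where "a \<noteq> b" "e = {a, b}" using assms by (meson card_2_iff)
  then show ?thesis by (simp add: power3_eq_cube algebra_simps)
qed

lemma sum_edges_deg_sum_cube:
  assumes "simple_graph V E"
  shows "(\<Sum>e\<in>E. (\<Sum>v\<in>e. deg E v) ^ 3) = M4 V E + 3 * ReZM E"
proof -
  have "(\<Sum>e\<in>E. (\<Sum>v\<in>e. deg E v) ^ 3)
      = (\<Sum>e\<in>E. \<Sum>v\<in>e. deg E v ^ 3) + 3 * ReZM E"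
    using assms unfolding simple_graph_def ReZM_def
    by (simp add: sum_cube_doubleton sum.distrib sum_distrib_left)
  also have "(\<Sum>e\<in>E. \<Sum>v\<in>e. deg E v ^ 3) = M4 V E"
    using sum_over_edges_eq_sum_deg[of V E "\<lambda>v. deg E v ^ 3"] finite_edges[OF assms] assms
    unfolding simple_graph_def M4_def by (simp add: power4_eq_xxxx power3_eq_cube mult.assoc)
  finally show ?thesis .
qed

lemma sum_cube_shift:
  fixes g :: "'a \<Rightarrow> nat"
  shows "(\<Sum>x\<in>A. (g x + c) ^ 3) = (\<Sum>x\<in>A. g x ^ 3) + 3 * c * (\<Sum>x\<in>A. g x ^ 2)
     + 3 * c^2 * (\<Sum>x\<in>A. g x) + card A * c ^ 3"
proof -
  have "(g x + c) ^ 3 = g x ^ 3 + 3 * c * g x ^ 2 + 3 * c^2 * g x + c ^ 3" for x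
    by (simp add: power3_eq_cube power2_eq_square algebra_simps)
  then show ?thesis
    by (simp add: sum.distrib sum_distrib_left)
qed

theorem theorem6:
  fixes V1 :: "'a set" and E1 :: "'a set set" and V2 :: "'b set" and E2 :: "'b set set"
  assumes "simple_graph V1 E1" and "connected_graph V1 E1"
    and "simple_graph V2 E2" and "connected_graph V2 E2"
  shows "Fidx (QjoinV V1 E1 V2) (QjoinE E1 V2 E2) =
      Fidx V1 E1 + Fidx V2 E2 + 3 * card V2 ^ 2 * M1 V1 E1 + 3 * card E1 * M1 V2 E2
      + M4 V1 E1 + 3 * card V2 * HM E1 + 3 * ReZM E1
      + card E1 ^ 2 * (6 * card E2 + card E1 * card V2) + card E1 * card V2 ^ 3"
proof -
  let ?s = "\<lambda>e. \<Sum>v\<in>e. deg E1 v" and ?n2 = "card V2" and ?m1 = "card E1"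
  have fin: "finite V1" "finite E1" "finite V2"
    using assms(1,3) finite_edges[OF assms(1)] unfolding simple_graph_def by auto
  have "Fidx (QjoinV V1 E1 V2) (QjoinE E1 V2 E2)
      = Fidx V1 E1 + (\<Sum>e\<in>E1. (?s e + ?n2) ^ 3) + (\<Sum>w\<in>V2. (deg E2 w + ?m1) ^ 3)"
    unfolding Fidx_def sum_QjoinV[OF fin] using assms(1,3)
    by (simp add: deg_QjoinE_vertex1 deg_QjoinE_subdivision deg_QjoinE_vertex2)
  also have "(\<Sum>e\<in>E1. (?s e + ?n2) ^ 3)
      = M4 V1 E1 + 3 * ReZM E1 + 3 * ?n2 * HM E1 + 3 * ?n2 ^ 2 * M1 V1 E1 + ?m1 * ?n2 ^ 3"
    unfolding sum_cube_shift HM_def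
      sum_edges_deg_sum_cube[OF assms(1)] sum_edges_deg_sum[OF assms(1)] ..
  also have "(\<Sum>w\<in>V2. (deg E2 w + ?m1) ^ 3)
      = Fidx V2 E2 + 3 * ?m1 * M1 V2 E2 + 3 * ?m1 ^ 2 * (2 * card E2) + ?n2 * ?m1 ^ 3"
    unfolding sum_cube_shift Fidx_def M1_def sum_deg_eq_twice_card_edges[OF assms(3)] ..
  finally show ?thesis by (simp add: algebra_simps power2_eq_square power3_eq_cube)
qed

end
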